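(* Let $\mathcal C$ be an operadic category and $e$ an object of $\mathcal C$. Then the functor $R_e:\mathcal C/e\to\mathcal C^{|e|}$ preserves fibrewise triviality: if $\varphi:(\psi\varphi)\to\psi$ is a fibrewise trivial morphism of $\mathcal C/e$, then $R_e(\varphi)=\varphi^\psi$ is a fibrewise trivial morphism of $\mathcal C^{|e|}$.
   Context: Operadic categories: $\mathcal S$ is a skeleton of finite sets, with fixed equivalences $R_I:\mathcal S/I\to\mathcal S^I$ sending $f:J\to I$ to its fibres. An operadic category is a category $\mathcal C$ with a functor $|\cdot|:\mathcal C\to\mathcal S$ and functors $R_c:\mathcal C/c\to\mathcal C^{|c|}$ with $|\cdot|^{|c|}\circ R_c=R_{|c|}\circ(|\cdot|/c)$; the fibre $\psi^{-1}i$ of $\psi:c\to d$ at $i\in|d|$ is the $i$-th component of $R_d(\psi)$; for $\varphi:b\to c,\psi:c\to d$, $\varphi^\psi=R_d(\varphi:\psi\varphi\to\psi)$ with components $\varphi^\psi_j:(\psi\varphi)^{-1}j\to\psi^{-1}j$; $u$ is trivial if $|u|=1$ and $R_u=\mathrm{dom}$. Axioms: fibres of identities are trivial; double slice condition: for $\psi:c\to d$, $R_c\circ(\mathrm{dom}/\psi)=(\cong)\circ(\prod_jR_{\psi^{-1}j})\circ(R_d/\psi)$ as functors $(\mathcal C/d)/\psi\to\mathcal C^{|c|}$, via $\mathcal C^{|d|}/R_d\psi\cong\prod_j\mathcal C/\psi^{-1}j$ and $|c|\cong\sum_j|\psi|^{-1}j$ (on objects: $(\varphi^\psi_{|\psi|(i)})^{-1}i=\varphi^{-1}i$).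 A morphism $\varphi$ of $\mathcal C$ is fibrewise trivial if all its fibres are trivial objects. A morphism of $\mathcal C/e$ is fibrewise trivial if its underlying morphism in $\mathcal C$ is; a morphism $(\pi_i)_{i\in|e|}$ of $\mathcal C^{|e|}$ is fibrewise trivial if each $\pi_i$ is. *)

theory Defs
  imports Main
begin

text \<open>
Skeleton S of finite sets: the object n is the set {0..<n}; a morphism m -> n is
represented by a function nat => nat, only its values on {0..<m} matter.
The fixed equivalences R_I : S/I -> S^I are the standard order-preserving ones:
the fibre of f : J -> I over i is {k in J. f k = i}, renumbered in increasing order.
\<close>

definition enum_set :: "nat set \<Rightarrow> nat \<Rightarrow> nat" where
  "enum_set A k = sorted_list_of_set A ! k"

definition pos_in :: "nat set \<Rightarrow> nat \<Rightarrow> nat" where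
  "pos_in A x = card {y \<in> A. y < x}"

text \<open>Data of a category together with a cardinality functor and the fibre functors.
  fib f i        = the i-th component of R_(cod f)(f), i.e. f^(-1) i;
  fibm phi psi j = phi^psi_j, the j-th component of R_(cod psi)(phi : psi phi -> psi).\<close>

record ('o, 'm) opcat =
  Ob :: "'o set"
  Mor :: "'m set"
  arr_dom :: "'m \<Rightarrow> 'o"
  arr_cod :: "'m \<Rightarrow> 'o"
  cmp :: "'m \<Rightarrow> 'm \<Rightarrow> 'm"   (* cmp g f = g o f *)
  idt :: "'o \<Rightarrow> 'm"
  ocard :: "'o \<Rightarrow> nat"
  mcard :: "'m \<Rightarrow> nat \<Rightarrow> nat"
  fib :: "'m \<Rightarrow> nat \<Rightarrow> 'o"
  fibm :: "'m \<Rightarrow> 'm \<Rightarrow> nat \<Rightarrow> 'm"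

definition composable :: "('o,'m,'x) opcat_scheme \<Rightarrow> 'm \<Rightarrow> 'm \<Rightarrow> bool" where
  "composable C f g \<longleftrightarrow> f \<in> Mor C \<and> g \<in> Mor C \<and> arr_cod C f = arr_dom C g"

definition is_category :: "('o,'m,'x) opcat_scheme \<Rightarrow> bool" where
  "is_category C \<longleftrightarrow>
     (\<forall>f\<in>Mor C. arr_dom C f \<in> Ob C \<and> arr_cod C f \<in> Ob C) \<and>
     (\<forall>c\<in>Ob C. idt C c \<in> Mor C \<and> arr_dom C (idt C c) = c \<and> arr_cod C (idt C c) = c) \<and>
     (\<forall>f g. composable C f g \<longrightarrow>
        cmp C g f \<in> Mor C \<and> arr_dom C (cmp C g f) = arr_dom C f \<and> arr_cod C (cmp C g f) = arr_cod C g) \<and>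
     (\<forall>f\<in>Mor C. cmp C (idt C (arr_cod C f)) f = f \<and> cmp C f (idt C (arr_dom C f)) = f) \<and>
     (\<forall>f g h. composable C f g \<and> composable C g h \<longrightarrow> cmp C h (cmp C g f) = cmp C (cmp C h g) f)"

definition card_functor :: "('o,'m,'x) opcat_scheme \<Rightarrow> bool" where
  "card_functor C \<longleftrightarrow>
     (\<forall>f\<in>Mor C. \<forall>k < ocard C (arr_dom C f). mcard C f k < ocard C (arr_cod C f)) \<and>
     (\<forall>c\<in>Ob C. \<forall>k < ocard C c. mcard C (idt C c) k = k) \<and>
     (\<forall>f g. composable C f g \<longrightarrow>
        (\<forall>k < ocard C (arr_dom C f). mcard C (cmp C g f) k = mcard C g (mcard C f k)))"

definition sfib :: "('o,'m,'x) opcat_scheme \<Rightarrow> 'm \<Rightarrow> nat \<Rightarrow> nat set" where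
  "sfib C f j = {k. k < ocard C (arr_dom C f) \<and> mcard C f k = j}"

text \<open>R_c : C/c -> C^|c| is a functor with |.|^|c| o R_c = R_|c| o (|.|/c).\<close>
definition fibre_functors :: "('o,'m,'x) opcat_scheme \<Rightarrow> bool" where
  "fibre_functors C \<longleftrightarrow>
     (\<forall>f\<in>Mor C. \<forall>i < ocard C (arr_cod C f).
        fib C f i \<in> Ob C \<and> ocard C (fib C f i) = card (sfib C f i)) \<and>
     (\<forall>\<phi> \<psi>. composable C \<phi> \<psi> \<longrightarrow> (\<forall>j < ocard C (arr_cod C \<psi>).
        fibm C \<phi> \<psi> j \<in> Mor C \<and>
        arr_dom C (fibm C \<phi> \<psi> j) = fib C (cmp C \<psi> \<phi>) j \<and>
        arr_cod C (fibm C \<phi> \<psi> j) = fib C \<psi> j \<and>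
        (\<forall>k < ocard C (fib C (cmp C \<psi> \<phi>) j).
           mcard C (fibm C \<phi> \<psi> j) k =
             pos_in (sfib C \<psi> j) (mcard C \<phi> (enum_set (sfib C (cmp C \<psi> \<phi>) j) k))))) \<and>
     (\<forall>\<psi>\<in>Mor C. \<forall>j < ocard C (arr_cod C \<psi>).
        fibm C (idt C (arr_dom C \<psi>)) \<psi> j = idt C (fib C \<psi> j)) \<and>
     (\<forall>\<phi> \<phi>' \<psi>. composable C \<phi> \<phi>' \<and> composable C \<phi>' \<psi> \<longrightarrow>
        (\<forall>j < ocard C (arr_cod C \<psi>).
           fibm C (cmp C \<phi>' \<phi>) \<psi> j = cmp C (fibm C \<phi>' \<psi> j) (fibm C \<phi> (cmp C \<psi> \<phi>') j)))"

definition trivial_obj :: "('o,'m,'x) opcat_scheme \<Rightarrow> 'o \<Rightarrow> bool" where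
  "trivial_obj C u \<longleftrightarrow> u \<in> Ob C \<and> ocard C u = 1 \<and>
     (\<forall>f\<in>Mor C. arr_cod C f = u \<longrightarrow> fib C f 0 = arr_dom C f) \<and>
     (\<forall>\<phi> \<psi>. composable C \<phi> \<psi> \<and> arr_cod C \<psi> = u \<longrightarrow> fibm C \<phi> \<psi> 0 = \<phi>)"

definition operadic_category :: "('o,'m,'x) opcat_scheme \<Rightarrow> bool" where
  "operadic_category C \<longleftrightarrow>
     is_category C \<and> card_functor C \<and> fibre_functors C \<and>
     \<comment> \<open>fibres of identities are trivial\<close>
     (\<forall>c\<in>Ob C. \<forall>i < ocard C c. trivial_obj C (fib C (idt C c) i)) \<and>
     \<comment> \<open>double slice condition, objects: (phi^psi_{|psi| i})^{-1} i' = phi^{-1} i,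
         where i' is the position of i in the fibre |psi|^{-1}(|psi| i)\<close>
     (\<forall>\<phi> \<psi>. composable C \<phi> \<psi> \<longrightarrow> (\<forall>i < ocard C (arr_cod C \<phi>).
        fib C \<phi> i =
          fib C (fibm C \<phi> \<psi> (mcard C \<psi> i)) (pos_in (sfib C \<psi> (mcard C \<psi> i)) i))) \<and>
     \<comment> \<open>double slice condition, morphisms: for chi : phi chi -> phi in (C/d)/psi\<close>
     (\<forall>\<chi> \<phi> \<psi>. composable C \<chi> \<phi> \<and> composable C \<phi> \<psi> \<longrightarrow> (\<forall>i < ocard C (arr_cod C \<phi>).
        fibm C \<chi> \<phi> i =
          fibm C (fibm C \<chi> (cmp C \<psi> \<phi>) (mcard C \<psi> i)) (fibm C \<phi> \<psi> (mcard C \<psi> i))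
               (pos_in (sfib C \<psi> (mcard C \<psi> i)) i)))"

definition fw_trivial :: "('o,'m,'x) opcat_scheme \<Rightarrow> 'm \<Rightarrow> bool" where
  "fw_trivial C \<phi> \<longleftrightarrow> (\<forall>i < ocard C (arr_cod C \<phi>). trivial_obj C (fib C \<phi> i))"

end

theory Submission
  imports Defs
begin

text \<open>The double slice condition identifies the fibre of \<open>\<phi>\<^sup>\<psi>\<^sub>j\<close> over \<open>i\<close> with the fibre of
  \<open>\<phi>\<close> over the \<open>i\<close>-th element of \<open>|\<psi>|\<^sup>-\<^sup>1 j\<close>, so the fibres of \<open>\<phi>\<^sup>\<psi>\<^sub>j\<close> are among those of \<open>\<phi>\<close>.\<close>

lemma set_take_sorted_wrt_less:
  fixes xs :: "'a::linorder list"
  assumes "sorted_wrt (<) xs" "i < length xs"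
  shows "set (take i xs) = {y \<in> set xs. y < xs ! i}"
proof -
  have split: "xs = take i xs @ xs ! i # drop (Suc i) xs"
    using assms(2) by (rule id_take_nth_drop)
  with assms(1) have "sorted_wrt (<) (take i xs @ xs ! i # drop (Suc i) xs)"
    by simp
  then have "\<forall>y\<in>set (take i xs). y < xs ! i" and "\<forall>y\<in>set (drop (Suc i) xs). xs ! i < y"
    by (auto simp: sorted_wrt_append)
  then show ?thesis
    by (subst (2) split) auto
qed

lemma
  assumes "finite A" "i < card A"
  shows enum_set_mem: "enum_set A i \<in> A"
    and pos_in_enum_set: "pos_in A (enum_set A i) = i"
proof -
  let ?xs = "sorted_list_of_set A"
  have len: "i < length ?xs"
    using assms by simp
  then show "enum_set A i \<in> A"
    using assms(1) unfolding enum_set_def by (metis nth_mem set_sorted_list_of_set)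
  have "{y \<in> A. y < enum_set A i} = set (take i ?xs)"
    using set_take_sorted_wrt_less[OF strict_sorted_list_of_set len] assms(1)
    by (simp add: enum_set_def)
  then show "pos_in A (enum_set A i) = i"
    using len by (simp add: pos_in_def distinct_card)
qed

lemma fib_fibm_eq_fib_enum_set:
  assumes C: "operadic_category C"
    and comp: "composable C \<phi> \<psi>"
    and i: "i < card (sfib C \<psi> j)"
  shows "fib C (fibm C \<phi> \<psi> j) i = fib C \<phi> (enum_set (sfib C \<psi> j) i)"
proof -
  define k where "k = enum_set (sfib C \<psi> j) i"
  have fin: "finite (sfib C \<psi> j)"
    by (simp add: sfib_def)
  have "k \<in> sfib C \<psi> j" and pos: "pos_in (sfib C \<psi> j) k = i"
    using enum_set_mem[OF fin i] pos_in_enum_set[OF fin i] by (simp_all add: k_def)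
  then have "k < ocard C (arr_cod C \<phi>)" and "mcard C \<psi> k = j"
    using comp by (auto simp: sfib_def composable_def)
  with C comp pos show ?thesis
    unfolding k_def[symmetric] operadic_category_def by metis
qed

theorem lemma8p1:
  assumes "operadic_category C"
    and "e \<in> Ob C"
    and "\<phi> \<in> Mor C" and "\<psi> \<in> Mor C"
    and "arr_cod C \<phi> = arr_dom C \<psi>" and "arr_cod C \<psi> = e"
    and "fw_trivial C \<phi>"
  shows "\<forall>j < ocard C e. fw_trivial C (fibm C \<phi> \<psi> j)"
proof (intro allI impI)
  fix j assume j: "j < ocard C e"
  have comp: "composable C \<phi> \<psi>"
    using assms by (simp add: composable_def)
  have ff: "fibre_functors C"
    using assms(1) by (simp add: operadic_category_def)
  have "arr_cod C (fibm C \<phi> \<psi> j) = fib C \<psi> j"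
    and "ocard C (fib C \<psi> j) = card (sfib C \<psi> j)"
    using ff comp assms(4,6) j unfolding fibre_functors_def by auto
  moreover have "trivial_obj C (fib C \<phi> (enum_set (sfib C \<psi> j) i))"
    if "i < card (sfib C \<psi> j)" for i
  proof -
    have "enum_set (sfib C \<psi> j) i \<in> sfib C \<psi> j"
      using that by (intro enum_set_mem) (simp_all add: sfib_def)
    then show ?thesis
      using assms(5,7) by (simp add: sfib_def fw_trivial_def)
  qed
  ultimately show "fw_trivial C (fibm C \<phi> \<psi> j)"
    using fib_fibm_eq_fib_enum_set[OF assms(1) comp] by (simp add: fw_trivial_def)
qed

end
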